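(* Let $D\geq2d+2$ and $0<\delta<\Delta/3$, with the setting and standing assumptions of the context. Let $\mathcal{A}_{1,\delta}$ be the set of $c\in\mathbb{R}^{D_{\alpha}}$ such that $\|c\|<a_{0}$ and $F_{c}(\xi_{j}(c))\neq F_{c}(x_{1})$ for every $j\in\{1,\ldots,m\}$ and every $x_{1}\in K$ satisfying $\|x_{1}-\xi_{i}(c)\|\geq3\delta$ for all $i\in\{1,\ldots,m\}$. Then every point of the open ball $\{c:\|c\|<a_{0}\}$ is a Lebesgue point of $\mathcal{A}_{1,\delta}$, and therefore the probability of $\mathcal{A}_{1,\delta}$ relative to this ball is $1$.
   Context: Notation: $\pi_{i}$ is the $i$-th coordinate projection on $\mathbb{R}^{d}$, $\mathbf{e}_{1}=(1,0,\ldots,0)$; for $\alpha\in\mathbb{Z}_{\geq0}^{d}$, $p_{\alpha}(x)=\prod_i(\pi_{i}x)^{\alpha_{i}}$; $\mathcal{I}_{2D-1}$ is the set of $\alpha$ with $|\alpha|=\sum\alpha_i\leq2D-1$, of cardinality $D_{\alpha}$; $c=(c_{\alpha})\in\mathbb{R}^{D_{\alpha}}$ with Euclidean norm. $\phi:\mathbb{R}^{d}\to\mathbb{R}^{d}$ is a diffeomorphism, $\phi_{c}(x)=\phi(x)+\mathbf{e}_{1}\sum_{\alpha}c_{\alpha}p_{\alpha}(x)$, and $F_{c}(x)=(\pi_{1}x,\pi_{1}\phi_{c}(x),\ldots,\pi_{1}\phi_{c}^{D-1}(x))$. Standing assumptions: $K$ is a compact ball centered at the origin, $K^{+}\supset K$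 a larger compact ball with $\phi^{j}(x)\in K^{+}$ for $x\in K$, $0\leq j\leq D-1$; $a_{0}>0$ is such that $\phi_{c}^{j}(x)\in K^{+}$ for $x\in K$, $0\leq j\leq D-1$, $\|c\|\leq a_{0}$; and for all $\|c\|\leq a_{0}$: $\phi_{c}$ is a $C^{3}$ diffeomorphism; $\phi_{c}$ has exactly $m$ fixed points $\xi_{1}(c),\ldots,\xi_{m}(c)$ (labelled consistently in $c$); no other periodic points of period $<2D$; all fixed points hyperbolic with $\pi_{1}\xi_{i}(c)\neq\pi_{1}\xi_{j}(c)$ for $i\neq j$; $F_{c}$ immersive at each fixed point. $\Delta$ is the minimum distance between distinct fixed points of $\phi_{c}$ lying in $K$, over $\|c\|\leq a_{0}$. A point $\mathfrak{a}$ is a Lebesgue point of a measurable set $A$ if $\mu(A\cap B_{\epsilon}(\mathfrak{a}))/\mu(B_{\epsilon}(\mathfrak{a}))\to1$ as $\epsilon\to0$, where $B_\epsilon(\mathfrak a)$ is the open $\epsilon$-ball and $\mu$ Lebesgue measure; probability of $A$ relative to $B$ is $\mu(A\cap B)/\mu(B)$. *)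

theory Defs
  imports "HOL-Analysis.Analysis"
begin

text \<open>Points of R^d are vectors of type real^'n (d = CARD('n)); a coordinate index
  i1 :: 'n plays the role of the first coordinate (pi_1, e_1).
  Multi-indices alpha are functions 'n => nat.\<close>

definition multi_idx :: "nat \<Rightarrow> ('n::finite \<Rightarrow> nat) set" where
  "multi_idx D = {\<alpha>. (\<Sum>i\<in>UNIV. \<alpha> i) \<le> 2 * D - 1}"

definition monom :: "('n::finite \<Rightarrow> nat) \<Rightarrow> real^'n \<Rightarrow> real" where
  "monom \<alpha> x = (\<Prod>i\<in>UNIV. (x $ i) ^ (\<alpha> i))"

text \<open>Coefficient vectors c in R^{D_alpha}: functions on the index set I
  (extensional, i.e. elements of PiE I (%_. UNIV)), with Euclidean norm.\<close>

definition cnorm :: "'a set \<Rightarrow> ('a \<Rightarrow> real) \<Rightarrow> real" where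
  "cnorm I c = sqrt (\<Sum>\<alpha>\<in>I. (c \<alpha>)^2)"

definition cspace :: "'a set \<Rightarrow> ('a \<Rightarrow> real) set" where
  "cspace I = PiE I (\<lambda>_. UNIV)"

definition czero :: "'a set \<Rightarrow> ('a \<Rightarrow> real)" where
  "czero I = restrict (\<lambda>_. 0) I"

definition cball_open :: "'a set \<Rightarrow> ('a \<Rightarrow> real) \<Rightarrow> real \<Rightarrow> ('a \<Rightarrow> real) set" where
  "cball_open I a e = {c \<in> cspace I. cnorm I (\<lambda>\<alpha>. c \<alpha> - a \<alpha>) < e}"

text \<open>Lebesgue measure on R^{D_alpha} = R^I (completed product of Lebesgue-Borel).\<close>
definition cleb :: "'a set \<Rightarrow> ('a \<Rightarrow> real) measure" where
  "cleb I = completion (PiM I (\<lambda>_. lborel))"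

definition lebesgue_point :: "'a set \<Rightarrow> ('a \<Rightarrow> real) set \<Rightarrow> ('a \<Rightarrow> real) \<Rightarrow> bool" where
  "lebesgue_point I A a \<longleftrightarrow>
     ((\<lambda>\<epsilon>. measure (cleb I) (A \<inter> cball_open I a \<epsilon>) / measure (cleb I) (cball_open I a \<epsilon>))
        \<longlongrightarrow> 1) (at_right 0)"

definition rel_prob :: "'a set \<Rightarrow> ('a \<Rightarrow> real) set \<Rightarrow> ('a \<Rightarrow> real) set \<Rightarrow> real" where
  "rel_prob I A B = measure (cleb I) (A \<inter> B) / measure (cleb I) B"

definition phi_c :: "(real^'n \<Rightarrow> real^'n) \<Rightarrow> 'n::finite \<Rightarrow> nat \<Rightarrow> (('n \<Rightarrow> nat) \<Rightarrow> real)
                      \<Rightarrow> real^'n \<Rightarrow> real^'n" where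
  "phi_c \<phi> i1 D c x = \<phi> x + (\<Sum>\<alpha>\<in>multi_idx D. c \<alpha> * monom \<alpha> x) *\<^sub>R axis i1 1"

definition delay_map :: "(real^'n \<Rightarrow> real^'n) \<Rightarrow> 'n::finite \<Rightarrow> nat \<Rightarrow> real^'n \<Rightarrow> real list" where
  "delay_map f i1 D x = map (\<lambda>j. ((f ^^ j) x) $ i1) [0..<D]"

fun Ck :: "nat \<Rightarrow> (real^'n::finite \<Rightarrow> real) \<Rightarrow> bool" where
  "Ck 0 g = continuous_on UNIV g"
| "Ck (Suc k) g = (\<exists>dg :: 'n \<Rightarrow> real^'n \<Rightarrow> real.
       (\<forall>x. (g has_derivative (\<lambda>h. \<Sum>i\<in>UNIV. h $ i * dg i x)) (at x)) \<and> (\<forall>i. Ck k (dg i)))"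

definition Ck_map :: "nat \<Rightarrow> (real^'n::finite \<Rightarrow> real^'m::finite) \<Rightarrow> bool" where
  "Ck_map k f \<longleftrightarrow> (\<forall>i. Ck k (\<lambda>x. f x $ i))"

definition Ck_diffeo :: "nat \<Rightarrow> (real^'n::finite \<Rightarrow> real^'n) \<Rightarrow> bool" where
  "Ck_diffeo k f \<longleftrightarrow> k \<ge> 1 \<and> bij f \<and> Ck_map k f \<and> Ck_map k (inv f)"

text \<open>A fixed point p of f is hyperbolic if the derivative Df(p) has no (complex)
  eigenvalue of modulus 1.\<close>
definition hyperbolic_fp :: "(real^'n::finite \<Rightarrow> real^'n) \<Rightarrow> real^'n \<Rightarrow> bool" where
  "hyperbolic_fp f p \<longleftrightarrow> f p = p \<and> (\<exists>f'. (f has_derivative f') (at p) \<and>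
     (\<forall>z::complex. cmod z = 1 \<longrightarrow>
        det ((\<chi> i j. complex_of_real (matrix f' $ i $ j)) - mat z) \<noteq> 0))"

definition immersive_at :: "nat \<Rightarrow> (nat \<Rightarrow> real^'n::finite \<Rightarrow> real) \<Rightarrow> real^'n \<Rightarrow> bool" where
  "immersive_at D F x \<longleftrightarrow> (\<exists>G. (\<forall>j<D. (F j has_derivative G j) (at x)) \<and>
     (\<forall>v. (\<forall>j<D. G j v = 0) \<longrightarrow> v = 0))"

text \<open>Delta: minimal distance between distinct fixed points lying in K, over all
  c with norm at most a0 (as an extended real; +infinity if there are no such pairs).\<close>
definition Delta_min :: "nat set \<Rightarrow> (nat \<Rightarrow> 'c \<Rightarrow> real^'n::finite) \<Rightarrow> 'c set
                          \<Rightarrow> (real^'n) set \<Rightarrow> ereal" where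
  "Delta_min M \<xi> C K = Inf {ereal (dist (\<xi> i c) (\<xi> j c)) | i j c.
       c \<in> C \<and> i \<in> M \<and> j \<in> M \<and> \<xi> i c \<noteq> \<xi> j c \<and> \<xi> i c \<in> K \<and> \<xi> j c \<in> K}"

definition A1 :: "(real^'n \<Rightarrow> real^'n) \<Rightarrow> 'n::finite \<Rightarrow> nat \<Rightarrow> real \<Rightarrow> nat
                  \<Rightarrow> (nat \<Rightarrow> (('n \<Rightarrow> nat) \<Rightarrow> real) \<Rightarrow> real^'n) \<Rightarrow> (real^'n) set \<Rightarrow> real
                  \<Rightarrow> (('n \<Rightarrow> nat) \<Rightarrow> real) set" where
  "A1 \<phi> i1 D a0 m \<xi> K \<delta> = {c \<in> cspace (multi_idx D). cnorm (multi_idx D) c < a0 \<and>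
      (\<forall>j\<in>{1..m}. \<forall>x1\<in>K. (\<forall>i\<in>{1..m}. norm (x1 - \<xi> i c) \<ge> 3 * \<delta>) \<longrightarrow>
          delay_map (phi_c \<phi> i1 D c) i1 D (\<xi> j c) \<noteq> delay_map (phi_c \<phi> i1 D c) i1 D x1)}"

end

theory Submission
  imports Defs
begin

(* If F_c(xi_j) = F_c(x1) with x1 not a fixed point, then pi_1 stays equal to pi_1 x1 along the
   first D points of the phi_c-orbit of x1. This orbit is then a sequence y_0, ..., y_d determined
   by phi and x1 alone, and c solves the d + 1 linear equations
   sum_alpha c_alpha p_alpha(y_k) = pi_1 x1 - pi_1 phi(y_k). Since there are no short periodic
   orbits, the y_k are distinct, so d + 1 of the monomials are unisolvent on them. Freezing the
   other coefficients, Cramer's rule writes the selected d + 1 coefficients as a differentiable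
   function of x1 in R^d, whose image in R^(d+1) is negligible; by Fubini the coefficient vectors
   outside A_(1,delta) form a null set, so every point of the ball is a Lebesgue point. *)

lemma differentiable_prod:
  fixes f :: "'i \<Rightarrow> 'a::real_normed_vector \<Rightarrow> real"
  assumes "\<And>i. i \<in> S \<Longrightarrow> f i differentiable (at x)"
  shows "(\<lambda>y. \<Prod>i\<in>S. f i y) differentiable (at x)"
  using assms by (induction S rule: infinite_finite_induct) auto

lemma differentiable_vec_nth:
  fixes f :: "'a::real_normed_vector \<Rightarrow> real^'n::finite"
  assumes "f differentiable (at x)"
  shows "(\<lambda>y. f y $ i) differentiable (at x)"
  using differentiable_chain_at[OF assms bounded_linear_imp_differentiable[OF bounded_linear_vec_nth]]
  by (simp add: comp_def)

lemma differentiable_vec_lambda: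
  fixes f :: "'m::finite \<Rightarrow> 'a::real_normed_vector \<Rightarrow> real"
  assumes "\<And>k. f k differentiable (at x)"
  shows "(\<lambda>y. \<chi> k. f k y) differentiable (at x)"
proof -
  have "(\<lambda>y. \<chi> k. f k y) = (\<lambda>y. \<Sum>k\<in>UNIV. f k y *\<^sub>R axis k 1)"
    by (simp add: fun_eq_iff vec_eq_iff axis_def if_distrib cong: if_cong)
  then show ?thesis using assms by simp
qed

lemma differentiable_det:
  fixes F :: "'a::real_normed_vector \<Rightarrow> real^'m::finite^'m"
  assumes "\<And>i j. (\<lambda>y. F y $ i $ j) differentiable (at x)"
  shows "(\<lambda>y. det (F y)) differentiable (at x)"
  unfolding det_def using assms by (auto intro!: differentiable_sum differentiable_mult differentiable_prod)

lemma differentiable_monom: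
  fixes f :: "'a::real_normed_vector \<Rightarrow> real^'n::finite"
  assumes "f differentiable (at x)"
  shows "(\<lambda>y. monom \<alpha> (f y)) differentiable (at x)"
  unfolding monom_def using differentiable_vec_nth[OF assms]
  by (intro differentiable_prod differentiable_power) auto

lemma continuous_on_differentiable_at:
  fixes f :: "'a::real_normed_vector \<Rightarrow> 'b::real_normed_vector"
  shows "(\<And>x. f differentiable (at x)) \<Longrightarrow> continuous_on UNIV f"
  by (auto intro: differentiable_imp_continuous_on differentiable_at_imp_differentiable_on)

lemma Ck_map_Suc_differentiable:
  assumes "Ck_map (Suc k) f"
  shows "f differentiable (at x)"
proof -
  have "(\<lambda>y. f y $ i) differentiable (at x)" for i
  proof -
    from assms obtain dg where "\<forall>x. ((\<lambda>y. f y $ i) has_derivative (\<lambda>h. \<Sum>j\<in>UNIV. h $ j * dg j x)) (at x)"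
      unfolding Ck_map_def Ck.simps by blast
    then have "((\<lambda>y. f y $ i) has_derivative (\<lambda>h. \<Sum>j\<in>UNIV. h $ j * dg j x)) (at x)" ..
    then show ?thesis by (rule differentiableI)
  qed
  then have "(\<lambda>y. \<chi> i. f y $ i) differentiable (at x)"
    by (rule differentiable_vec_lambda)
  then show ?thesis by simp
qed

lemma ex_root_in_compact_if_approximate_roots:
  fixes f :: "'x::euclidean_space \<Rightarrow> real"
  assumes K: "compact K" "K \<noteq> {}" and cont: "continuous_on UNIV f"
    and near: "\<And>k. infdist (q k) K < 1 / real (Suc k)"
    and small: "\<And>k. \<bar>f (q k)\<bar> < 1 / real (Suc k)"
  shows "\<exists>x\<in>K. f x = 0"
proof -
  have "infdist (q k) K \<le> 1" for k
  proof -
    have "1 / real (Suc k) \<le> 1" by simp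
    with near[of k] show ?thesis by linarith
  qed
  then have "\<forall>k. q k \<in> {x. infdist x K \<le> 1}" by simp
  then obtain l r where r: "strict_mono r" and lim: "(q \<circ> r) \<longlonglongrightarrow> l"
    using seq_compactE[OF compact_imp_seq_compact[OF compact_infdist_le[OF K(2,1) zero_less_one]]]
    by blast
  have \<epsilon>_lim: "(\<lambda>k. 1 / real (Suc (r k))) \<longlonglongrightarrow> 0"
    using LIMSEQ_subseq_LIMSEQ[OF LIMSEQ_inverse_real_of_nat r] by (simp add: comp_def inverse_eq_divide)
  have "infdist l K \<le> 0"
    using tendsto_infdist[OF lim] \<epsilon>_lim near
    by (intro LIMSEQ_le[of "\<lambda>k. infdist (q (r k)) K" _ "\<lambda>k. 1 / real (Suc (r k))"])
       (auto simp: comp_def less_imp_le)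
  then have "l \<in> K"
    using in_closed_iff_infdist_zero[OF compact_imp_closed[OF K(1)] K(2)] infdist_nonneg[of l K] by simp
  moreover have "\<bar>f l\<bar> \<le> 0"
    using continuous_on_tendsto_compose[OF cont lim] \<epsilon>_lim small
    by (intro LIMSEQ_le[of "\<lambda>k. \<bar>f (q (r k))\<bar>" _ "\<lambda>k. 1 / real (Suc (r k))"])
       (auto simp: comp_def less_imp_le intro: tendsto_rabs)
  ultimately show ?thesis by auto
qed

text \<open>A root in K is detected by approximate roots near K taken from a countable dense set.\<close>
lemma sets_Collect_ex_root_in_compact:
  fixes f :: "'x::euclidean_space \<Rightarrow> 'c \<Rightarrow> real"
  assumes K: "compact K"
    and cont: "\<And>c. continuous_on UNIV (\<lambda>x. f x c)"
    and meas: "\<And>x. (\<lambda>c. f x c) \<in> borel_measurable M"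
  shows "{c \<in> space M. \<exists>x\<in>K. f x c = 0} \<in> sets M"
proof (cases "K = {}")
  case False
  obtain Q :: "'x set" where Q: "countable Q" "\<And>U. open U \<Longrightarrow> U \<noteq> {} \<Longrightarrow> \<exists>q\<in>Q. q \<in> U"
    using countable_dense_setE by blast
  define \<epsilon> where "\<epsilon> k = 1 / real (Suc k)" for k
  have "{c \<in> space M. \<exists>x\<in>K. f x c = 0}
      = (\<Inter>k. \<Union>q\<in>{q\<in>Q. infdist q K < \<epsilon> k}. {c \<in> space M. \<bar>f q c\<bar> < \<epsilon> k})"
  proof (intro equalityI subsetI)
    fix c assume "c \<in> {c \<in> space M. \<exists>x\<in>K. f x c = 0}"
    then obtain x where c: "c \<in> space M" and x: "x \<in> K" "f x c = 0" by blast
    have "\<exists>q\<in>Q. infdist q K < \<epsilon> k \<and> \<bar>f q c\<bar> < \<epsilon> k" for k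
    proof -
      have "open ({q. infdist q K < \<epsilon> k} \<inter> {q. \<bar>f q c\<bar> < \<epsilon> k})"
        using cont by (intro open_Int open_Collect_less continuous_intros) auto
      moreover have "x \<in> {q. infdist q K < \<epsilon> k} \<inter> {q. \<bar>f q c\<bar> < \<epsilon> k}"
        using x by (simp add: \<epsilon>_def)
      ultimately show ?thesis using Q(2) by blast
    qed
    with c show "c \<in> (\<Inter>k. \<Union>q\<in>{q\<in>Q. infdist q K < \<epsilon> k}. {c \<in> space M. \<bar>f q c\<bar> < \<epsilon> k})"
      by blast
  next
    fix c assume "c \<in> (\<Inter>k. \<Union>q\<in>{q\<in>Q. infdist q K < \<epsilon> k}. {c \<in> space M. \<bar>f q c\<bar> < \<epsilon> k})"
    then obtain q where "\<And>k. infdist (q k) K < \<epsilon> k" "\<And>k. \<bar>f (q k) c\<bar> < \<epsilon> k" and "c \<in> space M"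
      by simp metis
    then show "c \<in> {c \<in> space M. \<exists>x\<in>K. f x c = 0}"
      using ex_root_in_compact_if_approximate_roots[OF K False cont[of c], of q] by (auto simp: \<epsilon>_def)
  qed
  also have "\<dots> \<in> sets M"
    using Q(1) meas by (intro sets.countable_INT sets.countable_UN') auto
  finally show ?thesis .
qed simp

lemma (in product_sigma_finite) null_sets_PiM_if_sections_null:
  assumes JR: "J \<inter> R = {}" "finite J" "finite R"
    and E: "E \<in> sets (PiM (J \<union> R) M)"
    and sections: "\<And>y. y \<in> space (PiM R M) \<Longrightarrow>
       {x \<in> space (PiM J M). merge J R (x, y) \<in> E} \<in> null_sets (PiM J M)"
  shows "E \<in> null_sets (PiM (J \<union> R) M)"
proof -
  interpret PJ: finite_product_sigma_finite M J by standard (rule JR)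
  interpret PR: finite_product_sigma_finite M R by standard (rule JR)
  interpret PP: pair_sigma_finite "PiM J M" "PiM R M" ..
  define E' where "E' = merge J R -` E \<inter> space (PiM J M \<Otimes>\<^sub>M PiM R M)"
  have E': "E' \<in> sets (PiM J M \<Otimes>\<^sub>M PiM R M)"
    unfolding E'_def by (rule measurable_sets[OF measurable_merge E])
  have "emeasure (PiM (J \<union> R) M) E = emeasure (distr (PiM J M \<Otimes>\<^sub>M PiM R M) (PiM (J \<union> R) M) (merge J R)) E"
    using distr_merge[OF JR] by simp
  also have "\<dots> = emeasure (PiM J M \<Otimes>\<^sub>M PiM R M) E'"
    unfolding E'_def by (rule emeasure_distr[OF measurable_merge E])
  also have "\<dots> = (\<integral>\<^sup>+y. emeasure (PiM J M) ((\<lambda>x. (x, y)) -` E') \<partial>PiM R M)"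
    by (rule PP.emeasure_pair_measure_alt2[OF E'])
  also have "\<dots> = (\<integral>\<^sup>+y. 0 \<partial>PiM R M)"
  proof (rule nn_integral_cong)
    fix y assume y: "y \<in> space (PiM R M)"
    have "(\<lambda>x. (x, y)) -` E' = {x \<in> space (PiM J M). merge J R (x, y) \<in> E}"
      using y by (auto simp: E'_def space_pair_measure)
    then show "emeasure (PiM J M) ((\<lambda>x. (x, y)) -` E') = 0"
      using sections[OF y] by (simp add: null_sets_def)
  qed
  finally show ?thesis using E by (simp add: null_sets_def)
qed

lemma emeasure_lborel_Collect_inner_Basis:
  fixes C :: "'a::euclidean_space \<Rightarrow> real set"
  assumes C: "\<And>b. b \<in> Basis \<Longrightarrow> C b \<in> sets borel"
  shows "emeasure lborel {x::'a. \<forall>b\<in>Basis. x \<bullet> b \<in> C b} = (\<Prod>b\<in>Basis. emeasure lborel (C b))"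
proof -
  have "{x::'a. \<forall>b\<in>Basis. x \<bullet> b \<in> C b} = (\<Inter>b\<in>Basis. (\<lambda>x. x \<bullet> b) -` C b)"
    by auto
  also have "\<dots> \<in> sets borel"
    using C by (intro sets.finite_INT) (auto intro: measurable_sets_borel[OF borel_measurable_inner])
  finally have "{x::'a. \<forall>b\<in>Basis. x \<bullet> b \<in> C b} \<in> sets lborel" by simp
  moreover have "indicator {x::'a. \<forall>b\<in>Basis. x \<bullet> b \<in> C b} x
      = (\<Prod>b\<in>Basis. indicator (C b) (x \<bullet> b) :: ennreal)" for x
    by (cases "\<forall>b\<in>Basis. x \<bullet> b \<in> C b") (auto intro!: prod_zero simp: indicator_def)
  ultimately have "emeasure lborel {x::'a. \<forall>b\<in>Basis. x \<bullet> b \<in> C b}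
      = (\<integral>\<^sup>+x. (\<Prod>b\<in>Basis. indicator (C b) (x \<bullet> b)) \<partial>lborel)"
    by (simp flip: nn_integral_indicator)
  also have "\<dots> = (\<Prod>b\<in>Basis. emeasure lborel (C b))"
    using C by (subst nn_integral_lborel_prod) auto
  finally show ?thesis .
qed

lemma distr_lborel_vec_PiM:
  fixes \<beta> :: "'m::finite \<Rightarrow> 'a"
  assumes inj: "inj \<beta>"
  shows "distr lborel (PiM (range \<beta>) (\<lambda>_. lborel)) (\<lambda>v::real^'m. \<lambda>\<alpha>\<in>range \<beta>. v $ inv \<beta> \<alpha>)
           = PiM (range \<beta>) (\<lambda>_. lborel)"
    (is "distr lborel ?P ?T = ?P")
proof -
  interpret product_sigma_finite "\<lambda>_. lborel :: real measure" ..
  have T: "?T \<in> measurable lborel ?P"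
    by (intro measurable_restrict) auto
  let ?k = "inv (\<lambda>k::'m. axis k (1::real))"
  have inj_axis: "inj (\<lambda>k::'m. axis k (1::real))"
    by (auto simp: inj_def axis_eq_axis)
  have Basis_range: "(Basis :: (real^'m) set) = range (\<lambda>k. axis k 1)"
    by (auto simp: Basis_vec_def)
  show ?thesis
  proof (rule PiM_eqI)
    fix A :: "'a \<Rightarrow> real set" assume A: "\<And>i. i \<in> range \<beta> \<Longrightarrow> A i \<in> sets lborel"
    have "?T -` PiE (range \<beta>) A \<inter> space lborel = {v. \<forall>b\<in>Basis. v \<bullet> b \<in> A (\<beta> (?k b))}"
      using inj by (auto simp: PiE_iff Basis_vec_def inner_axis inv_f_f[OF inj_axis])
    then have "emeasure (distr lborel ?P ?T) (PiE (range \<beta>) A) = (\<Prod>b\<in>Basis. emeasure lborel (A (\<beta> (?k b))))"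
      using A by (simp add: emeasure_distr[OF T] sets_PiM_I_finite emeasure_lborel_Collect_inner_Basis)
    also have "\<dots> = (\<Prod>k\<in>UNIV. emeasure lborel (A (\<beta> k)))"
      by (simp add: Basis_range prod.reindex[OF inj_axis] inv_f_f[OF inj_axis])
    also have "\<dots> = (\<Prod>\<alpha>\<in>range \<beta>. emeasure lborel (A \<alpha>))"
      by (simp add: prod.reindex[OF inj])
    finally show "emeasure (distr lborel ?P ?T) (PiE (range \<beta>) A) = (\<Prod>\<alpha>\<in>range \<beta>. emeasure lborel (A \<alpha>))" .
  qed auto
qed

section \<open>Unisolvent monomials\<close>

lemma multi_idx_eq: "multi_idx D = {\<alpha>. sum \<alpha> UNIV \<le> 2 * D - 1}"
  by (simp add: multi_idx_def)

lemma finite_degree_le: "finite {\<alpha> :: 'n::finite \<Rightarrow> nat. sum \<alpha> UNIV \<le> N}"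
proof (rule finite_subset)
  show "{\<alpha> :: 'n \<Rightarrow> nat. sum \<alpha> UNIV \<le> N} \<subseteq> PiE UNIV (\<lambda>_. {0..N})"
  proof (safe intro!: PiE_I)
    fix \<alpha> :: "'n \<Rightarrow> nat" and i assume "sum \<alpha> UNIV \<le> N"
    moreover have "\<alpha> i \<le> sum \<alpha> UNIV" by (rule member_le_sum) auto
    ultimately show "\<alpha> i \<in> {0..N}" by simp
  qed auto
qed (simp add: finite_PiE)

lemma finite_multi_idx: "finite (multi_idx D :: ('n::finite \<Rightarrow> nat) set)"
  by (simp add: multi_idx_eq finite_degree_le)

lemma zero_in_multi_idx: "(\<lambda>_. 0) \<in> multi_idx D"
  by (simp add: multi_idx_def)

lemma monom_add: "monom (\<lambda>i. \<alpha> i + \<beta> i) x = monom \<alpha> x * monom \<beta> x"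
  by (simp add: monom_def power_add prod.distrib)

lemma monom_zero: "monom (\<lambda>_. 0) x = 1"
  by (simp add: monom_def)

lemma monom_add_coord: "monom (\<lambda>j. \<beta> j + (if j = i then 1 else 0)) x = x $ i * monom \<beta> x"
proof -
  have "monom (\<lambda>j. if j = i then 1 else 0) x = x $ i"
    by (simp add: monom_def if_distrib[of "\<lambda>n. _ ^ n"] prod.delta' cong: if_cong)
  then show ?thesis by (simp add: monom_add)
qed

definition eval_at :: "('m::finite \<Rightarrow> 'x) \<Rightarrow> ('x \<Rightarrow> real) \<Rightarrow> real^'m" where
  "eval_at z q = (\<chi> r. q (z r))"

lemma eval_at_sum_diff_scale:
  "eval_at z (\<lambda>x. \<Sum>i\<in>F. a i * f i x - b i * g i x) = (\<Sum>i\<in>F. a i *\<^sub>R eval_at z (f i) - b i *\<^sub>R eval_at z (g i))"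
  by (simp add: eval_at_def vec_eq_iff sum_component)

text \<open>On the nodes z, q behaves like a polynomial of degree at most k: multiplied by any
  monomial of degree at most N - k it evaluates into the span of the evaluations of the
  monomials of degree at most N.\<close>
definition degree_le_on :: "nat \<Rightarrow> ('m::finite \<Rightarrow> real^'n::finite) \<Rightarrow> nat \<Rightarrow> (real^'n \<Rightarrow> real) \<Rightarrow> bool" where
  "degree_le_on N z k q \<longleftrightarrow> (\<forall>\<beta>. sum \<beta> UNIV + k \<le> N \<longrightarrow>
      eval_at z (\<lambda>x. q x * monom \<beta> x) \<in> span ((\<lambda>\<alpha>. eval_at z (monom \<alpha>)) ` {\<alpha>. sum \<alpha> UNIV \<le> N}))"

lemma degree_le_on_one: "degree_le_on N z 0 (\<lambda>_. 1)"
  unfolding degree_le_on_def by (auto intro: span_base)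

lemma degree_le_on_mult_affine:
  assumes "degree_le_on N z k q"
  shows "degree_le_on N z (Suc k) (\<lambda>x. q x * (b \<bullet> (x - w)))"
  unfolding degree_le_on_def
proof safe
  fix \<beta> :: "'b \<Rightarrow> nat" assume \<beta>: "sum \<beta> UNIV + Suc k \<le> N"
  let ?S = "span ((\<lambda>\<alpha>. eval_at z (monom \<alpha>)) ` {\<alpha>. sum \<alpha> UNIV \<le> N})"
  have coord: "eval_at z (\<lambda>x. q x * (x $ i * monom \<beta> x)) \<in> ?S" for i
  proof -
    let ?\<gamma> = "\<lambda>j. \<beta> j + (if j = i then 1 else 0)"
    have "sum ?\<gamma> UNIV + k \<le> N" using \<beta> by (simp add: sum.distrib)
    then have "eval_at z (\<lambda>x. q x * monom ?\<gamma> x) \<in> ?S"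
      using assms unfolding degree_le_on_def by blast
    then show ?thesis by (simp add: monom_add_coord)
  qed
  have const: "eval_at z (\<lambda>x. q x * monom \<beta> x) \<in> ?S"
    using assms \<beta> by (simp add: degree_le_on_def)
  have "(\<lambda>x. q x * (b \<bullet> (x - w)) * monom \<beta> x)
      = (\<lambda>x. \<Sum>i\<in>UNIV. b $ i * (q x * (x $ i * monom \<beta> x)) - (b $ i * w $ i) * (q x * monom \<beta> x))"
    by (simp add: inner_vec_def sum_distrib_left sum_distrib_right algebra_simps)
  then show "eval_at z (\<lambda>x. q x * (b \<bullet> (x - w)) * monom \<beta> x) \<in> ?S"
    by (simp only: eval_at_sum_diff_scale) (intro span_sum span_diff span_scale coord const)
qed

text \<open>The witness is the nodal polynomial P(x) = prod (r \<noteq> r0). (z r0 - z r) \<bullet> (x - z r), of degree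
  CARD('m) - 1, which vanishes at every node except z r0.\<close>
lemma axis_in_span_monomial_evaluations:
  fixes z :: "'m::finite \<Rightarrow> real^'n::finite"
  assumes inj: "inj z" and card: "CARD('m) \<le> Suc N"
  shows "axis r0 1 \<in> span ((\<lambda>\<alpha>. eval_at z (monom \<alpha>)) ` {\<alpha>. sum \<alpha> UNIV \<le> N})"
    (is "_ \<in> ?S")
proof -
  define P where "P F x = (\<Prod>r\<in>F. (z r0 - z r) \<bullet> (x - z r))" for F x
  have degree: "degree_le_on N z (card F) (P F)" if "finite F" for F
    using that
  proof (induction F rule: finite_induct)
    case empty
    then show ?case using degree_le_on_one by (simp add: P_def)
  next
    case (insert r F)
    then show ?case
      using degree_le_on_mult_affine[OF insert.IH, of "z r0 - z r" "z r"]
      by (simp add: P_def mult.commute)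
  qed
  define F where "F = UNIV - {r0}"
  have "eval_at z (\<lambda>x. P F x * monom (\<lambda>_. 0) x) \<in> ?S"
    using degree[of F] card by (simp add: degree_le_on_def F_def card_Diff_singleton)
  then have "eval_at z (P F) \<in> ?S" by (simp add: monom_zero)
  moreover have "P F (z r0) \<noteq> 0"
    using inj by (auto simp: P_def F_def inj_eq)
  moreover have "eval_at z (P F) = P F (z r0) *\<^sub>R axis r0 1"
  proof -
    have "P F (z r) = 0" if "r \<noteq> r0" for r
      unfolding P_def using that by (intro prod_zero bexI[of _ r]) (auto simp: F_def)
    then show ?thesis by (auto simp: vec_eq_iff eval_at_def axis_def)
  qed
  ultimately show ?thesis
    using span_scale[of "eval_at z (P F)" _ "inverse (P F (z r0))"] by simp
qed

lemma span_monomial_evaluations: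
  fixes z :: "'m::finite \<Rightarrow> real^'n::finite"
  assumes "inj z" "CARD('m) \<le> Suc N"
  shows "span ((\<lambda>\<alpha>. eval_at z (monom \<alpha>)) ` {\<alpha>. sum \<alpha> UNIV \<le> N}) = UNIV"
proof -
  have "Basis \<subseteq> span ((\<lambda>\<alpha>. eval_at z (monom \<alpha>)) ` {\<alpha>. sum \<alpha> UNIV \<le> N})"
    using axis_in_span_monomial_evaluations[OF assms] by (auto simp: Basis_vec_def)
  then show ?thesis
    by (metis span_Basis span_minimal subspace_span top.extremum_unique)
qed

lemma exists_nonsingular_column_selection:
  fixes v :: "'a \<Rightarrow> real^'m::finite"
  assumes span: "span (v ` S) = UNIV"
  shows "\<exists>\<beta>. inj \<beta> \<and> range \<beta> \<subseteq> S \<and> det (\<chi> r k. v (\<beta> k) $ r) \<noteq> 0"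
proof -
  obtain B where B: "B \<subseteq> v ` S" "independent B" "v ` S \<subseteq> span B"
    using maximal_independent_subset[of "v ` S"] by blast
  have span_B: "span B = UNIV"
    using span B(3) span_minimal[of "v ` S" "span B"] by auto
  obtain J where J: "J \<subseteq> S" "inj_on v J" "B = v ` J"
    using B(1) subset_image_inj by metis
  have "card J = CARD('m)"
    using dim_span_eq_card_independent[OF B(2)] span_B J card_image by fastforce
  moreover have "finite J"
    using independent_imp_finite[OF B(2)] J finite_imageD by blast
  ultimately obtain \<beta> :: "'m \<Rightarrow> 'a" where \<beta>: "bij_betw \<beta> UNIV J"
    by (metis finite_same_card_bij finite_class.finite_UNIV)
  define A where "A = (\<chi> r k. v (\<beta> k) $ r)"
  have "columns A = B"
    using \<beta> J(3) by (auto simp: columns_def column_def A_def bij_betw_def)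
  then have "vec.span (columns A) = UNIV"
    using span_B by (simp add: span_vec_eq)
  then obtain C where "A ** C = mat 1"
    using matrix_right_invertible_span_columns by blast
  then have "det A \<noteq> 0"
    by (metis invertible_det_nz invertible_right_inverse)
  then show ?thesis
    using \<beta> J(1) by (auto simp: A_def bij_betw_def)
qed

lemma exists_unisolvent_monomials:
  fixes z :: "'m::finite \<Rightarrow> real^'n::finite"
  assumes "inj z" "CARD('m) \<le> Suc N"
  shows "\<exists>\<beta>. inj \<beta> \<and> range \<beta> \<subseteq> {\<alpha>. sum \<alpha> UNIV \<le> N} \<and> det (\<chi> r k. monom (\<beta> k) (z r)) \<noteq> 0"
  using exists_nonsingular_column_selection[OF span_monomial_evaluations[OF assms]]
  by (simp add: eval_at_def)

section \<open>Solvable parametrised systems form a null set\<close>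

definition selected_matrix ::
    "('m::finite \<Rightarrow> 'a) \<Rightarrow> (real^'n::finite \<Rightarrow> 'a \<Rightarrow> 'm \<Rightarrow> real) \<Rightarrow> real^'n \<Rightarrow> real^'m^'m" where
  "selected_matrix \<beta> A x = (\<chi> r k. A x (\<beta> k) r)"

definition solvable_set :: "'a set \<Rightarrow> ('m::finite \<Rightarrow> 'a) \<Rightarrow> (real^'n::finite \<Rightarrow> 'a \<Rightarrow> 'm \<Rightarrow> real)
    \<Rightarrow> (real^'n \<Rightarrow> 'm \<Rightarrow> real) \<Rightarrow> ('a \<Rightarrow> real) set" where
  "solvable_set I \<beta> A b = {c \<in> PiE I (\<lambda>_. UNIV). \<exists>x. det (selected_matrix \<beta> A x) \<noteq> 0 \<and>
     (\<forall>r. (\<Sum>\<alpha>\<in>I. c \<alpha> * A x \<alpha> r) = b x r)}"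

locale smooth_overdetermined_system =
  fixes I :: "'a set" and \<beta> :: "'m::finite \<Rightarrow> 'a"
    and A :: "real^'n::finite \<Rightarrow> 'a \<Rightarrow> 'm \<Rightarrow> real" and b :: "real^'n \<Rightarrow> 'm \<Rightarrow> real"
  assumes finite_I: "finite I" and inj_\<beta>: "inj \<beta>" and range_\<beta>: "range \<beta> \<subseteq> I"
    and A_differentiable: "\<And>\<alpha> r x. (\<lambda>x. A x \<alpha> r) differentiable (at x)"
    and b_differentiable: "\<And>r x. (\<lambda>x. b x r) differentiable (at x)"
    and dim_less: "CARD('n) < CARD('m)"
begin

definition reduced_rhs :: "('a \<Rightarrow> real) \<Rightarrow> real^'n \<Rightarrow> real^'m" where
  "reduced_rhs y x = (\<chi> r. b x r - (\<Sum>\<alpha>\<in>I - range \<beta>. y \<alpha> * A x \<alpha> r))"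

definition cramer_solution :: "('a \<Rightarrow> real) \<Rightarrow> real^'n \<Rightarrow> real^'m" where
  "cramer_solution y x = (\<chi> k. det (\<chi> i j. if j = k then reduced_rhs y x $ i else selected_matrix \<beta> A x $ i $ j)
                                  / det (selected_matrix \<beta> A x))"

lemma reduced_rhs_cong:
  assumes "\<And>\<alpha>. \<alpha> \<in> I - range \<beta> \<Longrightarrow> y \<alpha> = y' \<alpha>"
  shows "reduced_rhs y = reduced_rhs y'"
  using assms by (auto simp: fun_eq_iff vec_eq_iff reduced_rhs_def intro!: sum.cong)

lemma solution_eq_cramer_solution:
  assumes det: "det (selected_matrix \<beta> A x) \<noteq> 0"
    and solves: "\<And>r. (\<Sum>\<alpha>\<in>I. c \<alpha> * A x \<alpha> r) = b x r"
  shows "(\<chi> k. c (\<beta> k)) = cramer_solution c x"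
proof -
  have "selected_matrix \<beta> A x *v (\<chi> k. c (\<beta> k)) = reduced_rhs c x"
  proof (unfold vec_eq_iff, intro allI)
    fix r
    have "(\<Sum>\<alpha>\<in>I. c \<alpha> * A x \<alpha> r) = (\<Sum>\<alpha>\<in>range \<beta>. c \<alpha> * A x \<alpha> r) + (\<Sum>\<alpha>\<in>I - range \<beta>. c \<alpha> * A x \<alpha> r)"
      using sum.subset_diff[OF range_\<beta> finite_I] by (simp add: add.commute)
    also have "(\<Sum>\<alpha>\<in>range \<beta>. c \<alpha> * A x \<alpha> r) = (\<Sum>k\<in>UNIV. c (\<beta> k) * A x (\<beta> k) r)"
      by (simp add: sum.reindex[OF inj_\<beta>])
    finally show "(selected_matrix \<beta> A x *v (\<chi> k. c (\<beta> k))) $ r = reduced_rhs c x $ r"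
      using solves[of r]
      by (simp add: matrix_vector_mult_def selected_matrix_def reduced_rhs_def mult.commute)
  qed
  then show ?thesis
    unfolding cramer_solution_def using cramer[OF det] by blast
qed

lemma cramer_solution_differentiable:
  assumes "det (selected_matrix \<beta> A x) \<noteq> 0"
  shows "cramer_solution y differentiable (at x)"
proof -
  have entries: "(\<lambda>x. selected_matrix \<beta> A x $ i $ j) differentiable (at x)"
    "(\<lambda>x. reduced_rhs y x $ i) differentiable (at x)" for i j
    using finite_I by (auto simp: selected_matrix_def reduced_rhs_def A_differentiable b_differentiable)
  have "(\<lambda>x. if j = k then reduced_rhs y x $ i else selected_matrix \<beta> A x $ i $ j) differentiable (at x)"
    for i j k by (cases "j = k") (simp_all add: entries)
  then show ?thesis
    unfolding cramer_solution_def using assms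
    by (intro differentiable_vec_lambda differentiable_divide differentiable_det) (auto simp: entries)
qed

text \<open>Fixing the coefficients y outside range \<beta>, the remaining ones of a solvable c form the
  Cramer solution at some x, so they lie in a differentiable image of R^n in R^m with n < m.\<close>
lemma solvable_section_null:
  assumes F: "F \<in> sets (PiM (range \<beta>) (\<lambda>_. lborel))"
    and in_solvable: "\<And>u. u \<in> F \<Longrightarrow> merge (range \<beta>) (I - range \<beta>) (u, y) \<in> solvable_set I \<beta> A b"
  shows "F \<in> null_sets (PiM (range \<beta>) (\<lambda>_. lborel))"
proof -
  let ?P = "PiM (range \<beta>) (\<lambda>_. lborel)"
  let ?T = "\<lambda>v::real^'m. \<lambda>\<alpha>\<in>range \<beta>. v $ inv \<beta> \<alpha>"
  let ?S = "{x. det (selected_matrix \<beta> A x) \<noteq> 0}"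
  have T: "?T \<in> measurable lborel ?P"
    by (intro measurable_restrict) auto
  have "?T -` F \<subseteq> cramer_solution y ` ?S"
  proof
    fix v assume "v \<in> ?T -` F"
    define c where "c = merge (range \<beta>) (I - range \<beta>) (?T v, y)"
    have "c \<in> solvable_set I \<beta> A b"
      unfolding c_def using \<open>v \<in> ?T -` F\<close> by (intro in_solvable) simp
    then obtain x where x: "det (selected_matrix \<beta> A x) \<noteq> 0"
      and solves: "\<And>r. (\<Sum>\<alpha>\<in>I. c \<alpha> * A x \<alpha> r) = b x r"
      unfolding solvable_set_def by blast
    have rhs: "reduced_rhs c = reduced_rhs y"
      by (rule reduced_rhs_cong) (simp add: c_def merge_def)
    have "v = (\<chi> k. c (\<beta> k))"
      by (simp add: c_def vec_eq_iff merge_def inv_f_f[OF inj_\<beta>])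
    also have "\<dots> = cramer_solution c x"
      by (rule solution_eq_cramer_solution[OF x solves])
    also have "\<dots> = cramer_solution y x"
      unfolding cramer_solution_def rhs ..
    finally show "v \<in> cramer_solution y ` ?S" using x by blast
  qed
  moreover have "negligible (cramer_solution y ` ?S)"
    using dim_less cramer_solution_differentiable
    by (intro negligible_differentiable_image_lowdim) (auto intro!: differentiable_at_imp_differentiable_on)
  ultimately have "?T -` F \<in> null_sets lebesgue"
    using negligible_subset negligible_iff_null_sets by blast
  moreover have "?T -` F \<in> sets lborel"
    using measurable_sets[OF T F] by simp
  ultimately have "?T -` F \<in> null_sets lborel"
    using null_sets_completion_iff by blast
  then have "emeasure (distr lborel ?P ?T) F = 0"
    using F by (simp add: emeasure_distr[OF T F] null_setsD1)
  then show ?thesis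
    using F by (simp add: distr_lborel_vec_PiM[OF inj_\<beta>] null_sets_def)
qed

definition residual :: "real^'n \<Rightarrow> ('a \<Rightarrow> real) \<Rightarrow> real" where
  "residual x c = (\<Sum>r\<in>UNIV. \<bar>(\<Sum>\<alpha>\<in>I. c \<alpha> * A x \<alpha> r) - b x r\<bar>)"

text \<open>Restricting the solutions x to compact sets makes the pieces measurable, which Fubini needs.\<close>
definition solvable_piece :: "nat \<Rightarrow> ('a \<Rightarrow> real) set" where
  "solvable_piece n = {c \<in> space (PiM I (\<lambda>_. lborel)). \<exists>x\<in>{x. norm x \<le> real n \<and>
     1 / real (Suc n) \<le> \<bar>det (selected_matrix \<beta> A x)\<bar>}. residual x c = 0}"

lemma residual_eq_0_iff: "residual x c = 0 \<longleftrightarrow> (\<forall>r. (\<Sum>\<alpha>\<in>I. c \<alpha> * A x \<alpha> r) = b x r)"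
  unfolding residual_def by (subst sum_nonneg_eq_0_iff) auto

lemma solvable_piece_sets: "solvable_piece n \<in> sets (PiM I (\<lambda>_. lborel))"
  unfolding solvable_piece_def
proof (rule sets_Collect_ex_root_in_compact)
  have "continuous_on UNIV (\<lambda>x. det (selected_matrix \<beta> A x))"
    by (intro continuous_on_differentiable_at differentiable_det)
       (simp add: selected_matrix_def A_differentiable)
  then have "closed {x. norm x \<le> real n \<and> 1 / real (Suc n) \<le> \<bar>det (selected_matrix \<beta> A x)\<bar>}"
    by (intro closed_Collect_conj closed_Collect_le continuous_intros) auto
  moreover have "bounded {x. norm x \<le> real n \<and> 1 / real (Suc n) \<le> \<bar>det (selected_matrix \<beta> A x)\<bar>}"
    by (rule bounded_subset[OF bounded_cball[of 0 "real n"]]) auto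
  ultimately show "compact {x. norm x \<le> real n \<and> 1 / real (Suc n) \<le> \<bar>det (selected_matrix \<beta> A x)\<bar>}"
    by (simp add: compact_eq_bounded_closed)
  show "continuous_on UNIV (\<lambda>x. residual x c)" for c
    unfolding residual_def using finite_I
    by (intro continuous_intros continuous_on_differentiable_at A_differentiable b_differentiable)
  show "(\<lambda>c. residual x c) \<in> borel_measurable (PiM I (\<lambda>_. lborel))" for x
    unfolding residual_def using finite_I by measurable
qed

lemma solvable_piece_subset: "solvable_piece n \<subseteq> solvable_set I \<beta> A b"
proof
  fix c assume "c \<in> solvable_piece n"
  moreover have "0 < 1 / real (Suc n)" by simp
  ultimately show "c \<in> solvable_set I \<beta> A b"
    unfolding solvable_piece_def solvable_set_def residual_eq_0_iff by (force simp: space_PiM)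
qed

lemma solvable_piece_null: "solvable_piece n \<in> null_sets (PiM I (\<lambda>_. lborel))"
proof -
  let ?J = "range \<beta>" and ?R = "I - range \<beta>"
  have I_eq: "?J \<union> ?R = I" using range_\<beta> by auto
  have "solvable_piece n \<in> null_sets (PiM (?J \<union> ?R) (\<lambda>_. lborel))"
  proof (rule product_sigma_finite.null_sets_PiM_if_sections_null)
    show "product_sigma_finite (\<lambda>_. lborel :: real measure)" ..
    show "?J \<inter> ?R = {}" "finite ?J" "finite ?R" using finite_I by auto
    show E: "solvable_piece n \<in> sets (PiM (?J \<union> ?R) (\<lambda>_. lborel))"
      unfolding I_eq by (rule solvable_piece_sets)
    fix y :: "'a \<Rightarrow> real" assume y: "y \<in> space (PiM ?R (\<lambda>_. lborel))"
    let ?F = "{u \<in> space (PiM ?J (\<lambda>_. lborel)). merge ?J ?R (u, y) \<in> solvable_piece n}"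
    show "?F \<in> null_sets (PiM ?J (\<lambda>_. lborel))"
    proof (rule solvable_section_null)
      show "?F \<in> sets (PiM ?J (\<lambda>_. lborel))"
        using measurable_sets[OF measurable_compose[OF measurable_Pair2'[OF y] measurable_merge] E]
        by (simp add: vimage_def Int_def conj_commute)
    qed (use solvable_piece_subset in auto)
  qed
  then show ?thesis unfolding I_eq .
qed

lemma solvable_set_eq_Union_pieces: "solvable_set I \<beta> A b = (\<Union>n. solvable_piece n)"
proof (rule antisym)
  show "solvable_set I \<beta> A b \<subseteq> (\<Union>n. solvable_piece n)"
  proof
    fix c assume "c \<in> solvable_set I \<beta> A b"
    then obtain x where c: "c \<in> PiE I (\<lambda>_. UNIV)" and det: "det (selected_matrix \<beta> A x) \<noteq> 0"
      and "\<forall>r. (\<Sum>\<alpha>\<in>I. c \<alpha> * A x \<alpha> r) = b x r"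
      by (auto simp: solvable_set_def)
    then have "residual x c = 0" by (simp add: residual_eq_0_iff)
    obtain n :: nat where n: "max (norm x) (1 / \<bar>det (selected_matrix \<beta> A x)\<bar>) \<le> real n"
      using real_arch_simple by blast
    then have "1 / real (Suc n) \<le> \<bar>det (selected_matrix \<beta> A x)\<bar>"
      using det by (simp add: field_simps) (smt (verit) abs_ge_zero)
    then have "c \<in> solvable_piece n"
      using n c \<open>residual x c = 0\<close> by (auto simp: solvable_piece_def space_PiM)
    then show "c \<in> (\<Union>n. solvable_piece n)" by blast
  qed
qed (use solvable_piece_subset in blast)

lemma solvable_set_null: "solvable_set I \<beta> A b \<in> null_sets (PiM I (\<lambda>_. lborel))"
  unfolding solvable_set_eq_Union_pieces by (intro null_sets_UN solvable_piece_null)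

end

lemma cnorm_eq_L2_set: "cnorm I c = L2_set c I"
  by (simp add: cnorm_def L2_set_def)

lemma cnorm_czero: "cnorm I (\<lambda>\<alpha>. c \<alpha> - czero I \<alpha>) = cnorm I c"
  by (simp add: cnorm_def czero_def)

lemma cball_open_sets:
  assumes "finite I"
  shows "cball_open I a e \<in> sets (PiM I (\<lambda>_. lborel))"
proof -
  have "cball_open I a e = {c \<in> space (PiM I (\<lambda>_. lborel)). cnorm I (\<lambda>\<alpha>. c \<alpha> - a \<alpha>) < e}"
    by (simp add: cball_open_def cspace_def space_PiM)
  also have "\<dots> \<in> sets (PiM I (\<lambda>_. lborel))"
    unfolding cnorm_def using assms by measurable
  finally show ?thesis .
qed

lemma cball_open_subset_cube:
  assumes "finite I"
  shows "cball_open I a e \<subseteq> PiE I (\<lambda>\<alpha>. {a \<alpha> - e .. a \<alpha> + e})"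
proof
  fix c assume c: "c \<in> cball_open I a e"
  have "c \<alpha> \<in> {a \<alpha> - e .. a \<alpha> + e}" if "\<alpha> \<in> I" for \<alpha>
  proof -
    have "\<bar>c \<alpha> - a \<alpha>\<bar> \<le> L2_set (\<lambda>\<alpha>. \<bar>c \<alpha> - a \<alpha>\<bar>) I"
      using assms that by (rule member_le_L2_set)
    also have "\<dots> = cnorm I (\<lambda>\<alpha>. c \<alpha> - a \<alpha>)"
      by (simp add: cnorm_def L2_set_def)
    finally show ?thesis using c by (simp add: cball_open_def abs_diff_le_iff)
  qed
  moreover have "c \<in> extensional I"
    using c by (simp add: cball_open_def cspace_def PiE_iff)
  ultimately show "c \<in> PiE I (\<lambda>\<alpha>. {a \<alpha> - e .. a \<alpha> + e})"
    by (simp add: PiE_iff)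
qed

lemma open_cube_subset_cball_open:
  assumes "finite I" "I \<noteq> {}"
  shows "PiE I (\<lambda>\<alpha>. {a \<alpha> - e / card I <..< a \<alpha> + e / card I}) \<subseteq> cball_open I a e"
proof
  fix c assume c: "c \<in> PiE I (\<lambda>\<alpha>. {a \<alpha> - e / card I <..< a \<alpha> + e / card I})"
  have "cnorm I (\<lambda>\<alpha>. c \<alpha> - a \<alpha>) \<le> (\<Sum>\<alpha>\<in>I. \<bar>c \<alpha> - a \<alpha>\<bar>)"
    unfolding cnorm_eq_L2_set by (rule L2_set_le_sum_abs)
  also have "\<dots> < (\<Sum>\<alpha>\<in>I. e / card I)"
    using assms c by (intro sum_strict_mono) (auto simp: PiE_iff abs_less_iff)
  also have "\<dots> = e" using assms by simp
  finally show "c \<in> cball_open I a e"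
    using c by (auto simp: cball_open_def cspace_def PiE_iff)
qed

lemma measure_cball_open_pos:
  assumes I: "finite I" "I \<noteq> {}" and e: "e > 0"
  shows "0 < measure (PiM I (\<lambda>_. lborel)) (cball_open I a e)"
proof -
  let ?M = "PiM I (\<lambda>_. lborel)"
  interpret finite_product_sigma_finite "\<lambda>_. lborel" I
    by standard (use I in auto)
  define t where "t = e / card I"
  have t: "0 < t" using I e by (simp add: t_def card_gt_0_iff)
  have "0 < ennreal ((2 * t) ^ card I)"
    using t by simp
  also have "\<dots> = emeasure ?M (PiE I (\<lambda>\<alpha>. {a \<alpha> - t <..< a \<alpha> + t}))"
    using I t by (simp add: emeasure_PiM ennreal_power)
  also have "\<dots> \<le> emeasure ?M (cball_open I a e)"
    unfolding t_def by (intro emeasure_mono open_cube_subset_cball_open cball_open_sets I)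
  finally have pos: "0 < emeasure ?M (cball_open I a e)" .
  have "emeasure ?M (cball_open I a e) \<le> emeasure ?M (PiE I (\<lambda>\<alpha>. {a \<alpha> - e .. a \<alpha> + e}))"
    by (intro emeasure_mono cball_open_subset_cube sets_PiM_I_finite I) auto
  also have "\<dots> = ennreal ((2 * e) ^ card I)"
    using I e by (simp add: emeasure_PiM ennreal_power)
  finally have "emeasure ?M (cball_open I a e) < top"
    using ennreal_less_top le_less_trans by blast
  with pos show ?thesis
    unfolding measure_def by (rule enn2real_positive_iff[THEN iffD2, OF conjI])
qed

lemma cball_open_subset_cball_open:
  assumes "e \<le> a0 - cnorm I a"
  shows "cball_open I a e \<subseteq> cball_open I (czero I) a0"
proof
  fix c assume c: "c \<in> cball_open I a e"
  have "cnorm I c \<le> cnorm I (\<lambda>\<alpha>. c \<alpha> - a \<alpha>) + cnorm I a"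
    using L2_set_triangle_ineq[of "\<lambda>\<alpha>. c \<alpha> - a \<alpha>" a I] by (simp add: cnorm_eq_L2_set)
  also have "\<dots> < a0" using c assms by (auto simp: cball_open_def)
  finally show "c \<in> cball_open I (czero I) a0" using c by (simp add: cball_open_def cnorm_czero)
qed

lemma measure_ratio_eq_1_if_null_complement:
  assumes N: "N \<in> null_sets (PiM I (\<lambda>_. lborel))" and "B - A \<subseteq> N"
    and B: "B \<in> sets (PiM I (\<lambda>_. lborel))" "0 < measure (PiM I (\<lambda>_. lborel)) B"
  shows "measure (cleb I) (A \<inter> B) / measure (cleb I) B = 1"
proof -
  have "B - A \<in> null_sets (cleb I)"
    unfolding cleb_def using \<open>B - A \<subseteq> N\<close>
    by (intro null_sets_completion_subset[OF _ null_sets_completionI[OF N]])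
  then have "measure (cleb I) (A \<inter> B) = measure (cleb I) B"
    using B measure_Diff_null_set[of B "cleb I" "B - A"]
    by (simp add: cleb_def Diff_Diff_Int Int_commute)
  then show ?thesis using B by (simp add: cleb_def)
qed

lemma lebesgue_points_if_null_complement:
  fixes A N :: "('a \<Rightarrow> real) set"
  assumes I: "finite I" "I \<noteq> {}" and a0: "a0 > 0"
    and bad: "cball_open I (czero I) a0 - A \<subseteq> N"
    and N: "N \<in> null_sets (PiM I (\<lambda>_. lborel))"
  shows "(\<forall>a\<in>cball_open I (czero I) a0. lebesgue_point I A a)
         \<and> rel_prob I A (cball_open I (czero I) a0) = 1"
proof
  show "rel_prob I A (cball_open I (czero I) a0) = 1"
    unfolding rel_prob_def using bad cball_open_sets[OF I(1)] measure_cball_open_pos[OF I a0]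
    by (intro measure_ratio_eq_1_if_null_complement[OF N]) auto
  show "\<forall>a\<in>cball_open I (czero I) a0. lebesgue_point I A a"
  proof
    fix a assume "a \<in> cball_open I (czero I) a0"
    then have r: "0 < a0 - cnorm I a" by (simp add: cball_open_def cnorm_czero)
    have "measure (cleb I) (A \<inter> cball_open I a e) / measure (cleb I) (cball_open I a e) = 1"
      if "0 < e" "e < a0 - cnorm I a" for e
      using that bad cball_open_subset_cball_open[of e a0 I a] cball_open_sets[OF I(1)]
        measure_cball_open_pos[OF I]
      by (intro measure_ratio_eq_1_if_null_complement[OF N]) auto
    then have "\<forall>\<^sub>F e in at_right 0.
        measure (cleb I) (A \<inter> cball_open I a e) / measure (cleb I) (cball_open I a e) = 1"
      unfolding eventually_at_right_field using r by blast
    then show "lebesgue_point I A a"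
      unfolding lebesgue_point_def by (rule tendsto_eventually)
  qed
qed

section \<open>Orbits with constant first coordinate\<close>

text \<open>While the first coordinate of the phi_c-orbit of x stays equal to x $ i1, that orbit is this
  sequence, whatever c is.\<close>
primrec level_orbit :: "(real^'n::finite \<Rightarrow> real^'n) \<Rightarrow> 'n \<Rightarrow> real^'n \<Rightarrow> nat \<Rightarrow> real^'n" where
  "level_orbit \<phi> i1 x 0 = x"
| "level_orbit \<phi> i1 x (Suc k) =
     \<phi> (level_orbit \<phi> i1 x k) + (x $ i1 - \<phi> (level_orbit \<phi> i1 x k) $ i1) *\<^sub>R axis i1 1"

lemma level_orbit_differentiable:
  assumes "\<And>x. \<phi> differentiable (at x)"
  shows "(\<lambda>x. level_orbit \<phi> i1 x k) differentiable (at x)"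
proof (induction k)
  case (Suc k)
  have "(\<lambda>x. \<phi> (level_orbit \<phi> i1 x k)) differentiable (at x)"
    using differentiable_chain_at[OF Suc assms] by (simp add: comp_def)
  then show ?case
    by (simp add: differentiable_vec_nth)
qed simp

lemma phi_c_nth: "phi_c \<phi> i1 D c y $ i1 = \<phi> y $ i1 + (\<Sum>\<alpha>\<in>multi_idx D. c \<alpha> * monom \<alpha> y)"
  by (simp add: phi_c_def)

lemma funpow_phi_c_eq_level_orbit:
  assumes level: "\<forall>k<n. (phi_c \<phi> i1 D c ^^ k) x $ i1 = x $ i1" and "k < n"
  shows "(phi_c \<phi> i1 D c ^^ k) x = level_orbit \<phi> i1 x k"
  using \<open>k < n\<close>
proof (induction k)
  case (Suc k)
  let ?y = "level_orbit \<phi> i1 x k"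
  have step: "(phi_c \<phi> i1 D c ^^ Suc k) x = phi_c \<phi> i1 D c ?y"
    using Suc by simp
  then have "phi_c \<phi> i1 D c ?y $ i1 = x $ i1"
    using level Suc.prems by metis
  then have "(\<Sum>\<alpha>\<in>multi_idx D. c \<alpha> * monom \<alpha> ?y) = x $ i1 - \<phi> ?y $ i1"
    by (simp add: phi_c_nth)
  then show ?case
    unfolding step by (simp add: phi_c_def)
qed simp

lemma level_orbit_equation:
  assumes level: "\<forall>k<n. (phi_c \<phi> i1 D c ^^ k) x $ i1 = x $ i1" and "Suc k < n"
  shows "(\<Sum>\<alpha>\<in>multi_idx D. c \<alpha> * monom \<alpha> (level_orbit \<phi> i1 x k)) = x $ i1 - \<phi> (level_orbit \<phi> i1 x k) $ i1"
proof -
  have "(phi_c \<phi> i1 D c ^^ Suc k) x = phi_c \<phi> i1 D c (level_orbit \<phi> i1 x k)"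
    using funpow_phi_c_eq_level_orbit[OF level, of k] \<open>Suc k < n\<close> by simp
  then have "phi_c \<phi> i1 D c (level_orbit \<phi> i1 x k) $ i1 = x $ i1"
    using level \<open>Suc k < n\<close> by metis
  then show ?thesis by (simp add: phi_c_nth)
qed

lemma obtain_inj_below_card:
  obtains \<rho> :: "'m::finite \<Rightarrow> nat" where "inj \<rho>" "\<And>r. \<rho> r < CARD('m)"
proof -
  obtain \<rho> :: "'m \<Rightarrow> nat" where \<rho>: "bij_betw \<rho> UNIV {0..<CARD('m)}"
    using ex_bij_betw_finite_nat[of "UNIV :: 'm set"] by auto
  show thesis
  proof (rule that)
    show "inj \<rho>" using \<rho> by (rule bij_betw_imp_inj_on)
    show "\<rho> r < CARD('m)" for r using bij_betwE[OF \<rho>] by simp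
  qed
qed

lemma inj_on_funpow_if_no_short_periods:
  assumes inj: "inj f" and not_fixed: "f x \<noteq> x"
    and no_per: "\<And>y k. 1 \<le> k \<Longrightarrow> k < P \<Longrightarrow> (f ^^ k) y = y \<Longrightarrow> f y = y"
  shows "inj_on (\<lambda>k. (f ^^ k) x) {..<P}"
proof -
  have "(f ^^ a) x \<noteq> (f ^^ b) x" if ab: "a < b" "b < P" for a b
  proof
    assume eq: "(f ^^ a) x = (f ^^ b) x"
    have "(f ^^ (b - a)) ((f ^^ a) x) = (f ^^ (b - a + a)) x"
      by (simp add: funpow_add)
    also have "\<dots> = (f ^^ a) x"
      using eq ab by simp
    finally have "f ((f ^^ a) x) = (f ^^ a) x"
      using ab by (intro no_per[of "b - a"]) auto
    then have "(f ^^ a) (f x) = (f ^^ a) x"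
      by (simp add: funpow_swap1)
    then show False
      using inj_fn[OF inj] not_fixed by (auto dest: injD)
  qed
  then show ?thesis
    by (intro inj_onI) (metis lessThan_iff linorder_neqE_nat)
qed

lemma delay_map_eq_fixed_point:
  assumes fixed: "f \<xi> = \<xi>" and eq: "delay_map f i1 D \<xi> = delay_map f i1 D x" and "k < D"
  shows "(f ^^ k) x $ i1 = x $ i1"
proof -
  have "(f ^^ j) \<xi> = \<xi>" for j
    by (induction j) (simp_all add: fixed)
  moreover have "(f ^^ j) \<xi> $ i1 = (f ^^ j) x $ i1" if "j < D" for j
    using eq that by (simp add: delay_map_def map_eq_conv)
  ultimately show ?thesis
    using \<open>k < D\<close> by (metis funpow_0 gr_implies_not0 neq0_conv)
qed

text \<open>The equations saying that the first coordinate of phi_c takes the value x $ i1 at the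
  level-orbit points of x with times \<rho> r, as a linear system in the coefficients c.\<close>
definition orbit_monomials ::
    "(real^'n::finite \<Rightarrow> real^'n) \<Rightarrow> 'n \<Rightarrow> ('m \<Rightarrow> nat) \<Rightarrow> real^'n \<Rightarrow> ('n \<Rightarrow> nat) \<Rightarrow> 'm \<Rightarrow> real" where
  "orbit_monomials \<phi> i1 \<rho> x \<alpha> r = monom \<alpha> (level_orbit \<phi> i1 x (\<rho> r))"

definition orbit_defects ::
    "(real^'n::finite \<Rightarrow> real^'n) \<Rightarrow> 'n \<Rightarrow> ('m \<Rightarrow> nat) \<Rightarrow> real^'n \<Rightarrow> 'm \<Rightarrow> real" where
  "orbit_defects \<phi> i1 \<rho> x r = x $ i1 - \<phi> (level_orbit \<phi> i1 x (\<rho> r)) $ i1"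

lemma delay_coincidence_imp_solvable:
  fixes \<phi> :: "real^'n::finite \<Rightarrow> real^'n" and i1 :: 'n and D :: nat
    and c :: "('n \<Rightarrow> nat) \<Rightarrow> real" and \<rho> :: "'m::finite \<Rightarrow> nat"
  defines "f \<equiv> phi_c \<phi> i1 D c"
  assumes inj_f: "inj f"
    and no_per: "\<And>y k. 1 \<le> k \<Longrightarrow> k < 2 * D \<Longrightarrow> (f ^^ k) y = y \<Longrightarrow> f y = y"
    and fixed: "f \<xi> = \<xi>" and not_fixed: "f x \<noteq> x"
    and coincide: "delay_map f i1 D \<xi> = delay_map f i1 D x"
    and \<rho>: "inj \<rho>" "\<And>r. Suc (\<rho> r) < D"
    and c: "c \<in> cspace (multi_idx D)"
  shows "\<exists>\<beta>. inj \<beta> \<and> range \<beta> \<subseteq> multi_idx D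
           \<and> c \<in> solvable_set (multi_idx D) \<beta> (orbit_monomials \<phi> i1 \<rho>) (orbit_defects \<phi> i1 \<rho>)"
proof -
  have level: "\<forall>k<D. (f ^^ k) x $ i1 = x $ i1"
    using delay_map_eq_fixed_point[OF fixed coincide] by blast
  have "inj_on (\<lambda>k. (f ^^ k) x) {..<2 * D}"
    by (rule inj_on_funpow_if_no_short_periods[OF inj_f not_fixed no_per])
  moreover have "\<rho> r < 2 * D" for r
    using \<rho>(2)[of r] by linarith
  ultimately have "inj_on (\<lambda>k. (f ^^ k) x) (range \<rho>)"
    by (elim inj_on_subset) auto
  then have "inj ((\<lambda>k. (f ^^ k) x) \<circ> \<rho>)"
    using \<rho>(1) by (rule comp_inj_on[rotated])
  moreover have "(f ^^ \<rho> r) x = level_orbit \<phi> i1 x (\<rho> r)" for r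
    using funpow_phi_c_eq_level_orbit[OF level[unfolded f_def]] Suc_lessD[OF \<rho>(2)[of r]]
    unfolding f_def by simp
  ultimately have "inj (\<lambda>r. level_orbit \<phi> i1 x (\<rho> r))"
    by (simp add: comp_def)
  moreover have "CARD('m) \<le> Suc (2 * D - 1)"
  proof -
    have "CARD('m) \<le> card {..<D}"
      using \<rho> by (intro card_inj_on_le) (auto simp: Suc_lessD)
    then show ?thesis by simp
  qed
  ultimately obtain \<beta> where \<beta>: "inj \<beta>" "range \<beta> \<subseteq> multi_idx D"
      and det: "det (\<chi> r k. monom (\<beta> k) (level_orbit \<phi> i1 x (\<rho> r))) \<noteq> 0"
    using exists_unisolvent_monomials unfolding multi_idx_eq by blast
  have "(\<Sum>\<alpha>\<in>multi_idx D. c \<alpha> * monom \<alpha> (level_orbit \<phi> i1 x (\<rho> r)))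
      = x $ i1 - \<phi> (level_orbit \<phi> i1 x (\<rho> r)) $ i1" for r
    using level_orbit_equation[OF level[unfolded f_def] \<rho>(2)] .
  then have "c \<in> solvable_set (multi_idx D) \<beta> (orbit_monomials \<phi> i1 \<rho>) (orbit_defects \<phi> i1 \<rho>)"
    using c det unfolding solvable_set_def selected_matrix_def orbit_monomials_def orbit_defects_def cspace_def
    by (intro CollectI conjI exI[of _ x]) auto
  with \<beta> show ?thesis by blast
qed

lemma orbit_solvable_sets_null:
  fixes \<phi> :: "real^'n::finite \<Rightarrow> real^'n" and \<rho> :: "'m::finite \<Rightarrow> nat"
  assumes \<phi>: "\<And>x. \<phi> differentiable (at x)" and dim: "CARD('n) < CARD('m)"
  shows "(\<Union>\<beta>\<in>{\<beta>. inj \<beta> \<and> range \<beta> \<subseteq> multi_idx D}.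
           solvable_set (multi_idx D) \<beta> (orbit_monomials \<phi> i1 \<rho>) (orbit_defects \<phi> i1 \<rho>))
         \<in> null_sets (PiM (multi_idx D) (\<lambda>_. lborel))"
proof -
  have "smooth_overdetermined_system (multi_idx D) \<beta> (orbit_monomials \<phi> i1 \<rho>) (orbit_defects \<phi> i1 \<rho>)"
    if "inj \<beta>" "range \<beta> \<subseteq> multi_idx D" for \<beta>
    using that dim finite_multi_idx unfolding orbit_monomials_def orbit_defects_def
    by unfold_locales
      (auto intro!: differentiable_monom differentiable_diff differentiable_vec_nth level_orbit_differentiable
        differentiable_chain_at[OF _ \<phi>, unfolded comp_def] \<phi>)
  then show ?thesis
    by (auto intro!: null_sets_UN' smooth_overdetermined_system.solvable_set_null)
qed

theorem lemma15:
  fixes \<phi> :: "real^'n::finite \<Rightarrow> real^'n"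
    and i1 :: 'n
    and D m :: nat
    and r rp a0 \<delta> :: real
    and \<xi> :: "nat \<Rightarrow> (('n \<Rightarrow> nat) \<Rightarrow> real) \<Rightarrow> real^'n"
  defines "I \<equiv> multi_idx D :: ('n \<Rightarrow> nat) set"
    and "K \<equiv> cball (0::real^'n) r"
    and "Kp \<equiv> cball (0::real^'n) rp"
    and "Cl \<equiv> {c \<in> cspace (multi_idx D). cnorm (multi_idx D) c \<le> a0}"
  assumes D_ge: "D \<ge> 2 * CARD('n) + 2"
    and phi_diffeo: "Ck_diffeo 1 \<phi>"
    and K_ball: "0 < r" "r < rp"
    and phi_K: "\<forall>x\<in>K. \<forall>j<D. (\<phi> ^^ j) x \<in> Kp"
    and a0_pos: "a0 > 0"
    and phic_K: "\<forall>c\<in>Cl. \<forall>x\<in>K. \<forall>j<D. (phi_c \<phi> i1 D c ^^ j) x \<in> Kp"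
    and C3: "\<forall>c\<in>Cl. Ck_diffeo 3 (phi_c \<phi> i1 D c)"
    and fixpts: "\<forall>c\<in>Cl. {x. phi_c \<phi> i1 D c x = x} = (\<lambda>i. \<xi> i c) ` {1..m}
                        \<and> inj_on (\<lambda>i. \<xi> i c) {1..m}"
    and no_per: "\<forall>c\<in>Cl. \<forall>x k. 1 \<le> k \<and> k < 2 * D \<and> (phi_c \<phi> i1 D c ^^ k) x = x
                        \<longrightarrow> phi_c \<phi> i1 D c x = x"
    and hyp: "\<forall>c\<in>Cl. \<forall>i\<in>{1..m}. hyperbolic_fp (phi_c \<phi> i1 D c) (\<xi> i c)"
    and proj_dist: "\<forall>c\<in>Cl. \<forall>i\<in>{1..m}. \<forall>j\<in>{1..m}. i \<noteq> j \<longrightarrow> \<xi> i c $ i1 \<noteq> \<xi> j c $ i1"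
    and immersive: "\<forall>c\<in>Cl. \<forall>i\<in>{1..m}.
                      immersive_at D (\<lambda>j y. ((phi_c \<phi> i1 D c ^^ j) y) $ i1) (\<xi> i c)"
    and delta: "0 < \<delta>" "ereal (3 * \<delta>) < Delta_min {1..m} \<xi> Cl K"
  shows "(\<forall>a\<in>cball_open I (czero I) a0. lebesgue_point I (A1 \<phi> i1 D a0 m \<xi> K \<delta>) a)
         \<and> rel_prob I (A1 \<phi> i1 D a0 m \<xi> K \<delta>) (cball_open I (czero I) a0) = 1"
proof -
  let ?A = "A1 \<phi> i1 D a0 m \<xi> K \<delta>"
  obtain \<rho> :: "'n option \<Rightarrow> nat" where \<rho>: "inj \<rho>" "\<And>r. \<rho> r < CARD('n option)"
    using obtain_inj_below_card[where 'm = "'n option"] by blast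
  have \<rho>_bound: "Suc (\<rho> r) < D" for r
    using \<rho>(2)[of r] D_ge by (simp add: card_UNIV_option)
  have \<phi>_differentiable: "\<phi> differentiable (at x)" for x
    using phi_diffeo by (auto simp: Ck_diffeo_def intro: Ck_map_Suc_differentiable[of 0])
  define N where "N = (\<Union>\<beta>\<in>{\<beta>. inj \<beta> \<and> range \<beta> \<subseteq> I}.
                        solvable_set I \<beta> (orbit_monomials \<phi> i1 \<rho>) (orbit_defects \<phi> i1 \<rho>))"
  have "N \<in> null_sets (PiM I (\<lambda>_. lborel))"
    unfolding N_def I_def by (rule orbit_solvable_sets_null) (simp_all add: \<phi>_differentiable card_UNIV_option)
  moreover have "cball_open I (czero I) a0 - ?A \<subseteq> N"
  proof
    fix c assume c: "c \<in> cball_open I (czero I) a0 - ?A"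
    then have "c \<in> cspace I" "c \<in> Cl"
      by (auto simp: cball_open_def cnorm_czero Cl_def I_def)
    from c obtain j x1 where "j \<in> {1..m}" and far: "\<forall>i\<in>{1..m}. norm (x1 - \<xi> i c) \<ge> 3 * \<delta>"
      and coincide: "delay_map (phi_c \<phi> i1 D c) i1 D (\<xi> j c) = delay_map (phi_c \<phi> i1 D c) i1 D x1"
      by (auto simp: A1_def I_def cball_open_def cnorm_czero)
    have "phi_c \<phi> i1 D c x1 \<noteq> x1"
      using fixpts \<open>c \<in> Cl\<close> far delta(1) by force
    then obtain \<beta> where "inj \<beta>" "range \<beta> \<subseteq> I"
        "c \<in> solvable_set I \<beta> (orbit_monomials \<phi> i1 \<rho>) (orbit_defects \<phi> i1 \<rho>)"
      using delay_coincidence_imp_solvable[OF _ _ _ _ coincide \<rho>(1) \<rho>_bound] \<open>c \<in> cspace I\<close>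
        C3 no_per fixpts \<open>j \<in> {1..m}\<close> \<open>c \<in> Cl\<close> unfolding I_def Ck_diffeo_def bij_def by blast
    then show "c \<in> N" by (auto simp: N_def)
  qed
  ultimately show ?thesis
    using finite_multi_idx zero_in_multi_idx a0_pos unfolding I_def
    by (intro lebesgue_points_if_null_complement) auto
qed

end
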